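(* For every positive integer $\ell$, there exists a tree $T$ such that $\gamma_t(T)-\chi_{\mu_2}(T)=\ell$.
   Context: $\gamma_t(T)$ is the total domination number: the minimum size of a set $D$ such that every vertex has a neighbor in $D$. A set $M\subseteq V(G)$ is a $2$-distance mutual-visibility set if for every two vertices $u,v\in M$ there exists a shortest $u,v$-path of length at most $2$ none of whose internal vertices lies in $M$. $\chi_{\mu_2}(G)$ is the minimum cardinality of a partition of $V(G)$ into $2$-distance mutual-visibility sets. *)

theory Defs
  imports Main
begin

type_synonym 'a graph = "'a set \<times> 'a set set"

definition verts :: "'a graph \<Rightarrow> 'a set" where "verts G = fst G"
definition edges :: "'a graph \<Rightarrow> 'a set set" where "edges G = snd G"

definition simple_graph :: "'a graph \<Rightarrow> bool" where
  "simple_graph G \<longleftrightarrow> finite (verts G) \<and>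
     (\<forall>e\<in>edges G. \<exists>u v. e = {u, v} \<and> u \<noteq> v \<and> u \<in> verts G \<and> v \<in> verts G)"

definition adj :: "'a graph \<Rightarrow> 'a \<Rightarrow> 'a \<Rightarrow> bool" where
  "adj G u v \<longleftrightarrow> {u, v} \<in> edges G \<and> u \<noteq> v"

definition is_path :: "'a graph \<Rightarrow> 'a list \<Rightarrow> bool" where
  "is_path G xs \<longleftrightarrow> xs \<noteq> [] \<and> distinct xs \<and> set xs \<subseteq> verts G \<and>
     (\<forall>i. Suc i < length xs \<longrightarrow> adj G (xs ! i) (xs ! Suc i))"

definition path_betw :: "'a graph \<Rightarrow> 'a \<Rightarrow> 'a \<Rightarrow> 'a list \<Rightarrow> bool" where
  "path_betw G u v xs \<longleftrightarrow> is_path G xs \<and> hd xs = u \<and> last xs = v"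

definition path_len :: "'a list \<Rightarrow> nat" where "path_len xs = length xs - 1"

definition connected_graph :: "'a graph \<Rightarrow> bool" where
  "connected_graph G \<longleftrightarrow> (\<forall>u\<in>verts G. \<forall>v\<in>verts G. \<exists>xs. path_betw G u v xs)"

definition has_cycle :: "'a graph \<Rightarrow> bool" where
  "has_cycle G \<longleftrightarrow> (\<exists>xs. is_path G xs \<and> length xs \<ge> 3 \<and> adj G (last xs) (hd xs))"

definition is_tree :: "'a graph \<Rightarrow> bool" where
  "is_tree G \<longleftrightarrow> simple_graph G \<and> verts G \<noteq> {} \<and> connected_graph G \<and> \<not> has_cycle G"

definition gdist :: "'a graph \<Rightarrow> 'a \<Rightarrow> 'a \<Rightarrow> nat" where
  "gdist G u v = (LEAST n. \<exists>xs. path_betw G u v xs \<and> path_len xs = n)"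

definition shortest_path :: "'a graph \<Rightarrow> 'a \<Rightarrow> 'a \<Rightarrow> 'a list \<Rightarrow> bool" where
  "shortest_path G u v xs \<longleftrightarrow> path_betw G u v xs \<and> path_len xs = gdist G u v"

definition internal_verts :: "'a list \<Rightarrow> 'a set" where
  "internal_verts xs = set (butlast (tl xs))"

definition total_dominating :: "'a graph \<Rightarrow> 'a set \<Rightarrow> bool" where
  "total_dominating G D \<longleftrightarrow> D \<subseteq> verts G \<and> (\<forall>v\<in>verts G. \<exists>d\<in>D. adj G v d)"

definition total_domination_number :: "'a graph \<Rightarrow> nat" where
  "total_domination_number G = Min (card ` {D. total_dominating G D})"

definition dist2_mv_set :: "'a graph \<Rightarrow> 'a set \<Rightarrow> bool" where
  "dist2_mv_set G M \<longleftrightarrow> M \<subseteq> verts G \<and>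
     (\<forall>u\<in>M. \<forall>v\<in>M. \<exists>xs. shortest_path G u v xs \<and> path_len xs \<le> 2 \<and>
        internal_verts xs \<inter> M = {})"

definition is_partition_of :: "'a set set \<Rightarrow> 'a set \<Rightarrow> bool" where
  "is_partition_of P V \<longleftrightarrow> \<Union>P = V \<and> {} \<notin> P \<and>
     (\<forall>A\<in>P. \<forall>B\<in>P. A \<noteq> B \<longrightarrow> A \<inter> B = {})"

definition chi_mu2 :: "'a graph \<Rightarrow> nat" where
  "chi_mu2 G = Min (card ` {P. is_partition_of P (verts G) \<and> (\<forall>M\<in>P. dist2_mv_set G M)})"

end

theory Submission
  imports Defs
begin

text \<open>The witness is the spider with \<open>k = l + 2\<close> legs of length three. Every leaf forces its
  support vertex into a total dominating set and every support vertex forces a second vertex of its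
  leg, so \<open>\<gamma>\<^sub>t = 2k\<close>, attained by the near and the support vertices. The centre and the leaves
  are pairwise at distance at least three, so they need \<open>k + 1\<close> different 2-distance
  mutual-visibility classes, and one more class is forced; \<open>k + 2\<close> classes suffice: the centre,
  the near vertices, and the pairs of a support vertex with its leaf. Hence the difference is
  \<open>2k - (k + 2) = l\<close>.\<close>

lemma adj_sym: "adj G u v \<longleftrightarrow> adj G v u"
  unfolding adj_def by (auto simp: insert_commute)

lemma is_path_iff_successively:
  "is_path G xs \<longleftrightarrow> xs \<noteq> [] \<and> distinct xs \<and> set xs \<subseteq> verts G \<and> successively (adj G) xs"
  unfolding is_path_def successively_conv_nth by simp

lemma path_betw_rev: "path_betw G u v xs \<Longrightarrow> path_betw G v u (rev xs)"
  unfolding path_betw_def is_path_iff_successively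
  by (auto simp: hd_rev last_rev adj_sym[of G])

text \<open>Cut the concatenation of the two paths at the first vertex of the first one that lies on
  the second.\<close>
lemma path_betw_trans:
  assumes "path_betw G u r xs" "path_betw G r v ys"
  obtains zs where "path_betw G u v zs"
proof -
  have "\<exists>x\<in>set xs. x \<in> set ys"
    using assms unfolding path_betw_def is_path_def by (metis last_in_set hd_in_set)
  then obtain xs1 w xs2 where xs: "xs = xs1 @ w # xs2" "w \<in> set ys" "\<forall>y\<in>set xs1. y \<notin> set ys"
    using split_list_first_prop[of xs "\<lambda>x. x \<in> set ys"] by blast
  then obtain ys1 ys2 where ys: "ys = ys1 @ w # ys2" by (meson split_list)
  have "hd (xs1 @ w # ys2) = u" using assms(1) xs unfolding path_betw_def by (cases xs1) auto
  moreover have "last (xs1 @ w # ys2) = v" using assms(2) ys unfolding path_betw_def by auto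
  moreover have "is_path G (xs1 @ w # ys2)"
    using assms xs ys unfolding path_betw_def is_path_iff_successively
    by (auto simp: successively_append_iff successively_Cons)
  ultimately have "path_betw G u v (xs1 @ w # ys2)" unfolding path_betw_def by blast
  then show thesis by (rule that)
qed

lemma connected_graph_if_paths_to:
  assumes "\<And>v. v \<in> verts G \<Longrightarrow> \<exists>xs. path_betw G v r xs"
  shows "connected_graph G"
  unfolding connected_graph_def
proof (intro ballI)
  fix u v assume "u \<in> verts G" "v \<in> verts G"
  then obtain xs ys where "path_betw G u r xs" "path_betw G v r ys" using assms by blast
  then show "\<exists>zs. path_betw G u v zs" by (metis path_betw_rev path_betw_trans)
qed

lemma cycle_vertex_two_neighbours:
  assumes "is_path G xs" "length xs \<ge> 3" "adj G (last xs) (hd xs)" "m < length xs"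
  obtains i j where "i < length xs" "j < length xs" "i \<noteq> j"
    "adj G (xs ! m) (xs ! i)" "adj G (xs ! m) (xs ! j)"
proof -
  let ?n = "length xs"
  have step: "adj G (xs ! i) (xs ! Suc i)" if "Suc i < ?n" for i
    using assms(1) that unfolding is_path_def by blast
  have close: "adj G (xs ! (?n - 1)) (xs ! 0)"
    using assms(2,3) by (metis hd_conv_nth last_conv_nth list.size(3) not_numeral_le_zero)
  consider "m = 0" | "m = ?n - 1" | "0 < m" "m < ?n - 1" using assms(4) by linarith
  then show thesis
  proof cases
    case 1
    then show thesis
      using that[of 1 "?n - 1"] step[of 0] close assms(2) adj_sym[of G] by auto
  next
    case 2
    have "Suc (?n - 2) = m" using 2 assms(2) by simp
    then have "adj G (xs ! m) (xs ! (?n - 2))" using step[of "?n - 2"] assms(4) adj_sym[of G] by auto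
    moreover have "adj G (xs ! m) (xs ! 0)" using 2 close by simp
    ultimately show thesis using assms(2) by (intro that[of 0 "?n - 2"]) auto
  next
    case 3
    then show thesis
      using that[of "m - 1" "Suc m"] step[of "m - 1"] step[of m] adj_sym[of G] by auto
  qed
qed

text \<open>The deepest vertex of a cycle would have two distinct cycle neighbours, both its parent.\<close>
lemma no_cycle_if_edges_to_parent:
  fixes depth :: "'a \<Rightarrow> nat"
  assumes edge: "\<And>u v. adj G u v \<Longrightarrow>
    (depth v = Suc (depth u) \<and> parent v = u) \<or> (depth u = Suc (depth v) \<and> parent u = v)"
  shows "\<not> has_cycle G"
proof
  assume "has_cycle G"
  then obtain xs where xs: "is_path G xs" "length xs \<ge> 3" "adj G (last xs) (hd xs)"
    unfolding has_cycle_def by blast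
  have "finite (depth ` set xs)" "depth ` set xs \<noteq> {}" using xs(2) by auto
  then obtain m where m: "m < length xs" "depth (xs ! m) = Max (depth ` set xs)"
    by (metis Max_in imageE in_set_conv_nth)
  have deepest: "depth (xs ! i) \<le> depth (xs ! m)" if "i < length xs" for i
    using m(2) that by simp
  obtain i j where ij: "i < length xs" "j < length xs" "i \<noteq> j"
    "adj G (xs ! m) (xs ! i)" "adj G (xs ! m) (xs ! j)"
    using cycle_vertex_two_neighbours[OF xs m(1)] by blast
  have "parent (xs ! m) = xs ! i" "parent (xs ! m) = xs ! j"
    using edge[OF ij(4)] edge[OF ij(5)] deepest[OF ij(1)] deepest[OF ij(2)] by auto
  then show False
    using xs(1) ij(1-3) unfolding is_path_def by (simp add: nth_eq_iff_index_eq)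
qed

lemma path_betw_len_le_2_cases:
  assumes "path_betw G u v xs" "path_len xs \<le> 2"
  shows "(u = v \<and> xs = [u]) \<or> (adj G u v \<and> xs = [u, v]) \<or>
    (\<exists>w. adj G u w \<and> adj G w v \<and> xs = [u, w, v])"
proof -
  have "0 < length xs" using assms unfolding path_betw_def is_path_def by auto
  then have "length xs \<in> {1, 2, 3}"
    using assms(2) unfolding path_len_def by (simp del: length_greater_0_conv; arith)
  then consider a where "xs = [a]" | a b where "xs = [a, b]" | a b c where "xs = [a, b, c]"
    by (auto simp: numeral_3_eq_3 numeral_2_eq_2 length_Suc_conv)
  then show ?thesis
    by cases (use assms in \<open>auto simp: path_betw_def is_path_iff_successively\<close>)
qed

lemma shortest_pathI:
  assumes "path_betw G u v xs" "\<And>ys. path_betw G u v ys \<Longrightarrow> path_len xs \<le> path_len ys"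
  shows "shortest_path G u v xs"
  unfolding shortest_path_def gdist_def
  by (rule conjI[OF assms(1) Least_equality[symmetric]]) (use assms in auto)

lemma dist2_mv_set_iff:
  "dist2_mv_set G M \<longleftrightarrow> M \<subseteq> verts G \<and> (\<forall>u\<in>M. \<forall>v\<in>M.
     u = v \<or> adj G u v \<or> (\<exists>w\<in>verts G - M. adj G u w \<and> adj G w v))"
  (is "_ \<longleftrightarrow> _ \<and> (\<forall>u\<in>M. \<forall>v\<in>M. ?close u v)")
proof (intro iffI conjI ballI; (elim conjE)?)
  fix u v assume mv: "dist2_mv_set G M" and "u \<in> M" "v \<in> M"
  then obtain xs where xs: "shortest_path G u v xs" "path_len xs \<le> 2" "internal_verts xs \<inter> M = {}"
    unfolding dist2_mv_set_def by blast
  then have "set xs \<subseteq> verts G" unfolding shortest_path_def path_betw_def is_path_def by blast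
  with xs show "?close u v"
    using path_betw_len_le_2_cases[of G u v xs]
    unfolding shortest_path_def internal_verts_def by auto
next
  assume M: "M \<subseteq> verts G" and close: "\<forall>u\<in>M. \<forall>v\<in>M. ?close u v"
  show "dist2_mv_set G M" unfolding dist2_mv_set_def
  proof (intro conjI ballI M)
    fix u v assume u: "u \<in> M" and v: "v \<in> M"
    have short: "(u = v \<and> path_len ys = 0) \<or> (adj G u v \<and> path_len ys = 1)"
      if "path_betw G u v ys" "path_len ys < 2" for ys
      using path_betw_len_le_2_cases[of G u v ys] that by (auto simp: path_len_def)
    consider "u = v" | "u \<noteq> v" "adj G u v" | w where "u \<noteq> v" "\<not> adj G u v"
      "w \<in> verts G - M" "adj G u w" "adj G w v"
      using close u v by blast
    then show "\<exists>xs. shortest_path G u v xs \<and> path_len xs \<le> 2 \<and> internal_verts xs \<inter> M = {}"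
    proof cases
      case 1
      then have "shortest_path G u v [u]"
        using u M by (intro shortest_pathI) (auto simp: path_betw_def is_path_def path_len_def)
      then show ?thesis by (auto simp: path_len_def internal_verts_def)
    next
      case 2
      have "path_betw G u v [u, v]"
        using 2 u v M by (auto simp: path_betw_def is_path_iff_successively)
      moreover have "path_len [u, v] \<le> path_len ys" if "path_betw G u v ys" for ys
        using short[OF that] 2(1) by (cases "path_len ys < 2") (auto simp: path_len_def)
      ultimately have "shortest_path G u v [u, v]" by (rule shortest_pathI)
      then show ?thesis by (auto simp: path_len_def internal_verts_def)
    next
      case 3
      have "path_betw G u v [u, w, v]"
        using 3 u v M by (auto simp: path_betw_def is_path_iff_successively adj_def)
      moreover have "path_len [u, w, v] \<le> path_len ys" if "path_betw G u v ys" for ys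
        using short[OF that] 3(1,2) by (cases "path_len ys < 2") (auto simp: path_len_def)
      ultimately have "shortest_path G u v [u, w, v]" by (rule shortest_pathI)
      then show ?thesis using 3 by (auto simp: path_len_def internal_verts_def)
    qed
  qed
qed (auto simp: dist2_mv_set_def)

lemma dist2_mv_setD:
  assumes "dist2_mv_set G M" "u \<in> M" "v \<in> M"
  shows "u = v \<or> adj G u v \<or> (\<exists>w. w \<notin> M \<and> adj G u w \<and> adj G w v)"
  using assms unfolding dist2_mv_set_iff by blast

lemma total_domination_number_eqI:
  assumes "finite (verts G)" "total_dominating G D" "card D = n"
    and "\<And>D. total_dominating G D \<Longrightarrow> n \<le> card D"
  shows "total_domination_number G = n"
  unfolding total_domination_number_def
proof (rule Min_eqI)
  have "{D. total_dominating G D} \<subseteq> Pow (verts G)" by (auto simp: total_dominating_def)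
  then show "finite (card ` {D. total_dominating G D})"
    using assms(1) by (meson finite_Pow_iff finite_imageI finite_subset)
qed (use assms in auto)

lemma partition_subset_Pow: "is_partition_of P V \<Longrightarrow> P \<subseteq> Pow V"
  unfolding is_partition_of_def by blast

lemma partition_block_eq:
  "is_partition_of P V \<Longrightarrow> M \<in> P \<Longrightarrow> N \<in> P \<Longrightarrow> x \<in> M \<Longrightarrow> x \<in> N \<Longrightarrow> M = N"
  unfolding is_partition_of_def by blast

lemma chi_mu2_eqI:
  assumes "finite (verts G)" "is_partition_of P (verts G)" "\<forall>M\<in>P. dist2_mv_set G M" "card P = n"
    and "\<And>P. is_partition_of P (verts G) \<Longrightarrow> \<forall>M\<in>P. dist2_mv_set G M \<Longrightarrow> n \<le> card P"
  shows "chi_mu2 G = n"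
  unfolding chi_mu2_def
proof (rule Min_eqI)
  have "{P. is_partition_of P (verts G) \<and> (\<forall>M\<in>P. dist2_mv_set G M)} \<subseteq> Pow (Pow (verts G))"
    using partition_subset_Pow by blast
  then show "finite (card ` {P. is_partition_of P (verts G) \<and> (\<forall>M\<in>P. dist2_mv_set G M)})"
    using assms(1) by (meson finite_Pow_iff finite_imageI finite_subset)
qed (use assms in auto)

lemma card_le_card_partition:
  assumes "is_partition_of P V" "finite V" "S \<subseteq> V"
    and separated: "\<And>M u v. M \<in> P \<Longrightarrow> u \<in> M \<Longrightarrow> v \<in> M \<Longrightarrow> u \<in> S \<Longrightarrow> v \<in> S \<Longrightarrow> u = v"
  shows "card S \<le> card P"
proof -
  have "\<forall>u\<in>S. \<exists>M. M \<in> P \<and> u \<in> M" using assms(1,3) unfolding is_partition_of_def by blast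
  then obtain block where block: "\<And>u. u \<in> S \<Longrightarrow> block u \<in> P \<and> u \<in> block u" by metis
  have "inj_on block S" by (rule inj_onI) (metis block separated)
  then show ?thesis
    using block finite_subset[OF partition_subset_Pow[OF assms(1)]] assms(2)
    by (intro card_inj_on_le) auto
qed

text \<open>The spider with \<open>k\<close> legs of length 3: centre \<open>0\<close> and, for \<open>i < k\<close>, the leg
  \<open>0 - near i - support i - leaf i\<close>, encoded as \<open>3i+1, 3i+2, 3i+3\<close>.\<close>

definition near :: "nat \<Rightarrow> nat" where "near i = 3 * i + 1"
definition support :: "nat \<Rightarrow> nat" where "support i = 3 * i + 2"
definition leaf :: "nat \<Rightarrow> nat" where "leaf i = 3 * i + 3"

definition spider :: "nat \<Rightarrow> nat graph" where
  "spider k =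
    (insert 0 (near ` {..<k} \<union> support ` {..<k} \<union> leaf ` {..<k}),
     (\<lambda>i. {0, near i}) ` {..<k} \<union> (\<lambda>i. {near i, support i}) ` {..<k} \<union>
     (\<lambda>i. {support i, leaf i}) ` {..<k})"

lemma spider_vertex_eq_iff [simp]:
  "near i = near j \<longleftrightarrow> i = j" "support i = support j \<longleftrightarrow> i = j" "leaf i = leaf j \<longleftrightarrow> i = j"
  "near i \<noteq> support j" "support j \<noteq> near i" "near i \<noteq> leaf j" "leaf j \<noteq> near i"
  "support i \<noteq> leaf j" "leaf j \<noteq> support i"
  "near i \<noteq> 0" "support i \<noteq> 0" "leaf i \<noteq> 0" "0 \<noteq> near i" "0 \<noteq> support i" "0 \<noteq> leaf i"
  unfolding near_def support_def leaf_def by presburger+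

lemma spider_vertex_pos [simp]: "0 < near i" "0 < support i" "0 < leaf i"
  unfolding near_def support_def leaf_def by simp_all

lemma verts_spider:
  "verts (spider k) = insert 0 (near ` {..<k} \<union> support ` {..<k} \<union> leaf ` {..<k})"
  by (simp add: spider_def verts_def)

lemma edges_spider:
  "edges (spider k) = (\<lambda>i. {0, near i}) ` {..<k} \<union> (\<lambda>i. {near i, support i}) ` {..<k} \<union>
     (\<lambda>i. {support i, leaf i}) ` {..<k}"
  by (simp add: spider_def edges_def)

lemma finite_verts_spider: "finite (verts (spider k))"
  by (simp add: verts_spider)

lemma adj_spider: "adj (spider k) u v \<longleftrightarrow> (\<exists>i<k.
    {u, v} = {0, near i} \<or> {u, v} = {near i, support i} \<or> {u, v} = {support i, leaf i})"
  unfolding adj_def edges_spider by (auto simp: doubleton_eq_iff)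

lemma adj_spider_leaf: "i < k \<Longrightarrow> adj (spider k) (leaf i) w \<longleftrightarrow> w = support i"
  unfolding adj_spider by (auto simp: doubleton_eq_iff)
lemma adj_spider_support: "i < k \<Longrightarrow> adj (spider k) (support i) w \<longleftrightarrow> w = near i \<or> w = leaf i"
  unfolding adj_spider by (auto simp: doubleton_eq_iff)
lemma adj_spider_near: "i < k \<Longrightarrow> adj (spider k) (near i) w \<longleftrightarrow> w = 0 \<or> w = support i"
  unfolding adj_spider by (auto simp: doubleton_eq_iff)
lemma adj_spider_centre: "adj (spider k) 0 w \<longleftrightarrow> (\<exists>i<k. w = near i)"
  unfolding adj_spider by (auto simp: doubleton_eq_iff)

lemmas adj_spider_simps =
  adj_spider_leaf adj_spider_support adj_spider_near adj_spider_centre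

lemma simple_graph_spider: "simple_graph (spider k)"
proof -
  have "\<exists>u v. e = {u, v} \<and> u \<noteq> v \<and> u \<in> verts (spider k) \<and> v \<in> verts (spider k)"
    if "e \<in> edges (spider k)" for e
  proof -
    from that obtain i u v where "i < k" "e = {u, v}"
      "(u, v) \<in> {(0, near i), (near i, support i), (support i, leaf i)}"
      unfolding edges_spider by blast
    then show ?thesis by (intro exI[of _ u] exI[of _ v]) (auto simp: verts_spider)
  qed
  then show ?thesis unfolding simple_graph_def by (simp add: verts_spider)
qed

lemma connected_graph_spider: "connected_graph (spider k)"
proof (rule connected_graph_if_paths_to)
  fix v assume "v \<in> verts (spider k)"
  then consider "v = 0" | i where "i < k" "v = near i" | i where "i < k" "v = support i"
    | i where "i < k" "v = leaf i"
    unfolding verts_spider by auto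
  then show "\<exists>xs. path_betw (spider k) v 0 xs"
  proof cases
    case 1
    then show ?thesis by (intro exI[of _ "[0]"]) (auto simp: path_betw_def is_path_def verts_spider)
  next
    case (2 i)
    then show ?thesis
      by (intro exI[of _ "[near i, 0]"])
        (auto simp: path_betw_def is_path_iff_successively verts_spider adj_spider_simps)
  next
    case (3 i)
    then show ?thesis
      by (intro exI[of _ "[support i, near i, 0]"])
        (auto simp: path_betw_def is_path_iff_successively verts_spider adj_spider_simps)
  next
    case (4 i)
    then show ?thesis
      by (intro exI[of _ "[leaf i, support i, near i, 0]"])
        (auto simp: path_betw_def is_path_iff_successively verts_spider adj_spider_simps)
  qed
qed

lemma spider_no_cycle: "\<not> has_cycle (spider k)"
proof -
  define depth :: "nat \<Rightarrow> nat" where "depth v = (if v = 0 then 0 else (v - 1) mod 3 + 1)" for v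
  define parent :: "nat \<Rightarrow> nat" where "parent v = (if (v - 1) mod 3 = 0 then 0 else v - 1)" for v
  have "depth 0 = 0"
    "depth (near i) = 1" "depth (support i) = 2" "depth (leaf i) = 3"
    "parent (near i) = 0" "parent (support i) = near i" "parent (leaf i) = support i" for i
    unfolding depth_def parent_def near_def support_def leaf_def by (simp_all add: mod_Suc)
  then show ?thesis
    by (intro no_cycle_if_edges_to_parent[of _ depth parent]) (auto simp: adj_spider doubleton_eq_iff)
qed

lemma is_tree_spider: "is_tree (spider k)"
  unfolding is_tree_def
  using simple_graph_spider connected_graph_spider spider_no_cycle by (simp add: verts_spider)

lemma spider_total_dominating:
  assumes "k \<ge> 1"
  shows "total_dominating (spider k) (near ` {..<k} \<union> support ` {..<k})"
  unfolding total_dominating_def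
proof (intro conjI ballI)
  show "near ` {..<k} \<union> support ` {..<k} \<subseteq> verts (spider k)" by (auto simp: verts_spider)
  fix v assume "v \<in> verts (spider k)"
  then consider "v = 0" | i where "i < k" "v = near i" | i where "i < k" "v = support i"
    | i where "i < k" "v = leaf i"
    unfolding verts_spider by auto
  then show "\<exists>d\<in>near ` {..<k} \<union> support ` {..<k}. adj (spider k) v d"
  proof cases
    case 1
    then show ?thesis using assms by (intro bexI[of _ "near 0"]) (auto simp: adj_spider_simps)
  next
    case (2 i)
    then show ?thesis by (intro bexI[of _ "support i"]) (auto simp: adj_spider_simps)
  next
    case (3 i)
    then show ?thesis by (intro bexI[of _ "near i"]) (auto simp: adj_spider_simps)
  next
    case (4 i)
    then show ?thesis by (intro bexI[of _ "support i"]) (auto simp: adj_spider_simps)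
  qed
qed

text \<open>Each leaf forces its support vertex into \<open>D\<close>, and each support vertex forces its near
  vertex or its leaf.\<close>
lemma spider_total_dominating_card_ge:
  assumes "total_dominating (spider k) D"
  shows "2 * k \<le> card D"
proof -
  have D: "D \<subseteq> verts (spider k)" and dom: "\<And>v. v \<in> verts (spider k) \<Longrightarrow> \<exists>d\<in>D. adj (spider k) v d"
    using assms unfolding total_dominating_def by auto
  have supports: "support i \<in> D" if "i < k" for i
    using dom[of "leaf i"] that by (auto simp: verts_spider adj_spider_leaf)
  define partner where "partner i = (if near i \<in> D then near i else leaf i)" for i
  have partners: "partner i \<in> D" if "i < k" for i
    using dom[of "support i"] that by (auto simp: verts_spider adj_spider_support partner_def)
  have "inj_on partner {..<k}" by (rule inj_onI) (auto simp: partner_def split: if_splits)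
  moreover have "support ` {..<k} \<inter> partner ` {..<k} = {}" by (auto simp: partner_def)
  ultimately have "card (support ` {..<k} \<union> partner ` {..<k}) = k + k"
    by (simp add: card_Un_disjoint card_image inj_on_def)
  moreover have "support ` {..<k} \<union> partner ` {..<k} \<subseteq> D" using supports partners by auto
  moreover have "finite D" using D finite_verts_spider by (rule finite_subset)
  ultimately show ?thesis by (metis card_mono mult_2)
qed

lemma total_domination_number_spider:
  assumes "k \<ge> 1"
  shows "total_domination_number (spider k) = 2 * k"
proof (rule total_domination_number_eqI[OF finite_verts_spider spider_total_dominating[OF assms]])
  show "card (near ` {..<k} \<union> support ` {..<k}) = 2 * k"
    by (subst card_Un_disjoint) (auto simp: card_image inj_on_def)
qed (rule spider_total_dominating_card_ge)

lemma spider_dist2_mv_setD: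
  assumes mv: "dist2_mv_set (spider k) M" and ij: "i < k" "j < k"
  shows "leaf i \<in> M \<Longrightarrow> leaf j \<in> M \<Longrightarrow> i = j"
    and "leaf i \<in> M \<Longrightarrow> 0 \<notin> M"
    and "leaf j \<in> M \<Longrightarrow> near i \<in> M \<Longrightarrow> i = j"
    and "leaf j \<in> M \<Longrightarrow> support i \<in> M \<Longrightarrow> i = j"
    and "leaf i \<in> M \<Longrightarrow> near i \<in> M \<Longrightarrow> support i \<notin> M"
    and "support i \<in> M \<Longrightarrow> support j \<in> M \<Longrightarrow> i = j"
    and "0 \<in> M \<Longrightarrow> near i \<in> M \<Longrightarrow> near j \<in> M \<Longrightarrow> i = j"
proof -
  note close = dist2_mv_setD[OF mv]
  show "leaf i \<in> M \<Longrightarrow> leaf j \<in> M \<Longrightarrow> i = j"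
    using close[of "leaf i" "leaf j"] ij by (auto simp: adj_spider_simps)
  show "leaf i \<in> M \<Longrightarrow> 0 \<notin> M"
    using close[of "leaf i" 0] ij by (auto simp: adj_spider_simps)
  show "leaf j \<in> M \<Longrightarrow> near i \<in> M \<Longrightarrow> i = j"
    using close[of "leaf j" "near i"] ij by (auto simp: adj_spider_simps)
  show "leaf j \<in> M \<Longrightarrow> support i \<in> M \<Longrightarrow> i = j"
    using close[of "leaf j" "support i"] ij by (auto simp: adj_spider_simps)
  show "leaf i \<in> M \<Longrightarrow> near i \<in> M \<Longrightarrow> support i \<notin> M"
    using close[of "near i" "leaf i"] ij by (auto simp: adj_spider_simps)
  show "support i \<in> M \<Longrightarrow> support j \<in> M \<Longrightarrow> i = j"
    using close[of "support i" "support j"] ij by (auto simp: adj_spider_simps)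
  show "0 \<in> M \<Longrightarrow> near i \<in> M \<Longrightarrow> near j \<in> M \<Longrightarrow> i = j"
    using close[of "near i" "near j"] ij by (auto simp: adj_spider_simps)
qed

text \<open>If the blocks of the centre and of the leaves were all the blocks, each leg would put its
  near or its support vertex into the block of the centre; among three legs two would do the same,
  contradicting visibility.\<close>
lemma spider_mv_partition_extra_block:
  assumes "k \<ge> 3" and P: "is_partition_of P (verts (spider k))"
    and mv: "\<forall>M\<in>P. dist2_mv_set (spider k) M"
  obtains M where "M \<in> P" "0 \<notin> M" "\<forall>i<k. leaf i \<notin> M"
proof (rule ccontr)
  assume "\<not> thesis"
  with that have hit: "0 \<in> M \<or> (\<exists>i<k. leaf i \<in> M)" if "M \<in> P" for M
    using \<open>M \<in> P\<close> by blast
  have block: "\<exists>M\<in>P. v \<in> M" if "v \<in> verts (spider k)" for v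
    using P that unfolding is_partition_of_def by blast
  obtain M0 where M0: "M0 \<in> P" "0 \<in> M0" using block[of 0] by (auto simp: verts_spider)
  have centre_block: "near i \<in> M0 \<or> support i \<in> M0" if i: "i < k" for i
  proof (rule ccontr)
    assume not_centre: "\<not> ?thesis"
    have leg_block: "\<exists>N\<in>P. v \<in> N \<and> leaf i \<in> N"
      if v: "v \<in> {near i, support i}" for v
    proof -
      obtain N where N: "N \<in> P" "v \<in> N" using block[of v] v i by (auto simp: verts_spider)
      have "N \<noteq> M0" using N v not_centre by auto
      then have "0 \<notin> N" using partition_block_eq[OF P N(1) M0(1)] M0(2) by blast
      then obtain j where "j < k" "leaf j \<in> N" using hit[OF N(1)] by blast
      then have "leaf i \<in> N"
        using v spider_dist2_mv_setD(3,4)[of k N i j] mv N i by auto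
      then show ?thesis using N by blast
    qed
    obtain N where N: "N \<in> P" "near i \<in> N" "leaf i \<in> N" using leg_block by blast
    obtain S where S: "S \<in> P" "support i \<in> S" "leaf i \<in> S" using leg_block by blast
    have "N = S" using partition_block_eq[OF P N(1) S(1) N(3) S(3)] .
    then show False using spider_dist2_mv_setD(5)[of k N i i] mv N S i by auto
  qed
  have mv0: "dist2_mv_set (spider k) M0" using mv M0 by blast
  have "0 < k" "1 < k" "2 < k" using assms(1) by auto
  then show False
    using centre_block[of 0] centre_block[of 1] centre_block[of 2] M0(2)
      spider_dist2_mv_setD(6,7)[OF mv0, of 0 1] spider_dist2_mv_setD(6,7)[OF mv0, of 0 2]
      spider_dist2_mv_setD(6,7)[OF mv0, of 1 2]
    by auto
qed

lemma spider_mv_partition_card_ge: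
  assumes "k \<ge> 3" and P: "is_partition_of P (verts (spider k))"
    and mv: "\<forall>M\<in>P. dist2_mv_set (spider k) M"
  shows "k + 2 \<le> card P"
proof -
  obtain M where M: "M \<in> P" "0 \<notin> M" "\<forall>i<k. leaf i \<notin> M"
    by (rule spider_mv_partition_extra_block[OF assms])
  have "M \<noteq> {}" using P M(1) unfolding is_partition_of_def by blast
  then obtain v where v: "v \<in> M" by blast
  define S where "S = insert v (insert 0 (leaf ` {..<k}))"
  have "v \<notin> insert 0 (leaf ` {..<k})" using M v by (metis image_iff insert_iff lessThan_iff)
  then have "card S = k + 2" by (auto simp: S_def card_insert_if card_image inj_on_def)
  moreover have "card S \<le> card P"
  proof (rule card_le_card_partition[OF P finite_verts_spider])
    have "v \<in> verts (spider k)" using P M(1) v unfolding is_partition_of_def by blast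
    then show "S \<subseteq> verts (spider k)" by (auto simp: S_def verts_spider)
    fix N u w assume N: "N \<in> P" "u \<in> N" "w \<in> N" and uw: "u \<in> S" "w \<in> S"
    show "u = w"
    proof (cases "u = v \<or> w = v")
      case True
      then have "N = M" using partition_block_eq[OF P N(1) M(1)] N(2,3) v by blast
      then show ?thesis using True N(2,3) M uw by (auto simp: S_def)
    next
      case False
      then have "u \<in> insert 0 (leaf ` {..<k})" "w \<in> insert 0 (leaf ` {..<k})"
        using uw by (auto simp: S_def)
      moreover have "dist2_mv_set (spider k) N" using mv N(1) by blast
      ultimately show ?thesis using N(2,3) spider_dist2_mv_setD(1,2) by blast
    qed
  qed
  ultimately show ?thesis by simp
qed

definition spider_mv_partition :: "nat \<Rightarrow> nat set set" where
  "spider_mv_partition k = insert {0} (insert (near ` {..<k}) ((\<lambda>i. {support i, leaf i}) ` {..<k}))"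

lemma is_partition_spider_mv_partition:
  assumes "k \<ge> 1"
  shows "is_partition_of (spider_mv_partition k) (verts (spider k))"
  unfolding is_partition_of_def
proof (intro conjI ballI impI)
  show "\<Union> (spider_mv_partition k) = verts (spider k)"
    by (auto simp: spider_mv_partition_def verts_spider)
  show "{} \<notin> spider_mv_partition k" using assms by (auto simp: spider_mv_partition_def lessThan_empty_iff)
  fix A B assume "A \<in> spider_mv_partition k" "B \<in> spider_mv_partition k" "A \<noteq> B"
  then show "A \<inter> B = {}" by (auto simp: spider_mv_partition_def)
qed

lemma spider_mv_partition_dist2_mv_set:
  assumes "M \<in> spider_mv_partition k"
  shows "dist2_mv_set (spider k) M"
  unfolding dist2_mv_set_iff
proof (intro conjI ballI)
  show "M \<subseteq> verts (spider k)" using assms by (auto simp: spider_mv_partition_def verts_spider)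
  fix u v assume "u \<in> M" "v \<in> M"
  with assms show "u = v \<or> adj (spider k) u v \<or>
      (\<exists>w\<in>verts (spider k) - M. adj (spider k) u w \<and> adj (spider k) w v)"
    unfolding spider_mv_partition_def
    by (auto simp: adj_spider_simps verts_spider intro!: bexI[of _ 0])
qed

lemma card_spider_mv_partition:
  assumes "k \<ge> 1"
  shows "card (spider_mv_partition k) = k + 2"
proof -
  have near0: "near 0 \<in> near ` {..<k}" using assms by simp
  then have "{0} \<noteq> near ` {..<k}" by (metis singletonD spider_vertex_eq_iff(10))
  moreover have "near ` {..<k} \<notin> (\<lambda>i. {support i, leaf i}) ` {..<k}"
  proof
    assume "near ` {..<k} \<in> (\<lambda>i. {support i, leaf i}) ` {..<k}"
    then obtain i where "near ` {..<k} = {support i, leaf i}" by blast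
    with near0 have "near 0 \<in> {support i, leaf i}" by simp
    then show False by simp
  qed
  moreover have "{0} \<notin> (\<lambda>i. {support i, leaf i}) ` {..<k}" by (auto simp: doubleton_eq_iff)
  moreover have "inj_on (\<lambda>i. {support i, leaf i}) {..<k}" by (auto simp: inj_on_def doubleton_eq_iff)
  ultimately show ?thesis by (simp add: spider_mv_partition_def card_image)
qed

lemma chi_mu2_spider:
  assumes "k \<ge> 3"
  shows "chi_mu2 (spider k) = k + 2"
proof -
  have "k \<ge> 1" using assms by simp
  show ?thesis
  proof (rule chi_mu2_eqI[OF finite_verts_spider is_partition_spider_mv_partition[OF \<open>k \<ge> 1\<close>]
        _ card_spider_mv_partition[OF \<open>k \<ge> 1\<close>]])
    show "\<forall>M\<in>spider_mv_partition k. dist2_mv_set (spider k) M"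
      using spider_mv_partition_dist2_mv_set by blast
  qed (rule spider_mv_partition_card_ge[OF assms])
qed

theorem mainTheorem8:
  fixes l :: nat
  assumes "l \<ge> 1"
  shows "\<exists>T :: nat graph. is_tree T \<and> (\<exists>D. total_dominating T D) \<and>
           int (total_domination_number T) - int (chi_mu2 T) = int l"
proof -
  let ?T = "spider (l + 2)"
  have "total_domination_number ?T = 2 * (l + 2)" by (rule total_domination_number_spider) simp
  moreover have "chi_mu2 ?T = l + 4" using assms chi_mu2_spider[of "l + 2"] by simp
  moreover have "total_dominating ?T (near ` {..<l + 2} \<union> support ` {..<l + 2})"
    by (rule spider_total_dominating) simp
  ultimately show ?thesis using is_tree_spider[of "l + 2"] by (intro exI[of _ ?T]) auto
qed

end
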